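(* Let $X$ be a compact metrizable space, let $f\in\mathrm{C}(X)$ be self-adjoint, and let $\varepsilon>0$. Then there exist $n\in\mathbb N$, $\delta>0$ and self-adjoint $f_1,\dots,f_n\in\mathrm{C}(X)$ such that $\|f-f_i\|_\infty<\varepsilon$ for $i=1,\dots,n$, and $\frac1n\,|\{1\le i\le n:|f_i(x)|<\delta\}|<\varepsilon$ for all $x\in X$. In particular, $\frac1n(\tau(\chi_\delta(f_1))+\cdots+\tau(\chi_\delta(f_n)))<\varepsilon$ for every tracial state $\tau$ of $\mathrm{C}(X)$.
   Context: $\chi_\delta\colon\mathbb R\to\mathbb R$ is the continuous function equal to $1$ on $\{|t|<\delta/2\}$, $0$ on $\{|t|>\delta\}$, and linear otherwise. *)

theory Defs
  imports "HOL-Analysis.Analysis"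
begin

definition chi :: "real \<Rightarrow> real \<Rightarrow> real" where
  "chi \<delta> t = (if \<bar>t\<bar> < \<delta> / 2 then 1
               else if \<bar>t\<bar> > \<delta> then 0
               else 2 * (\<delta> - \<bar>t\<bar>) / \<delta>)"

definition sup_norm :: "'a set \<Rightarrow> ('a \<Rightarrow> 'b::real_normed_vector) \<Rightarrow> real" where
  "sup_norm X g = (if X = {} then 0 else (SUP x\<in>X. norm (g x)))"

definition tracial_state :: "'a::topological_space set \<Rightarrow> (('a \<Rightarrow> complex) \<Rightarrow> complex) \<Rightarrow> bool" where
  "tracial_state X \<tau> \<longleftrightarrow>
     (\<forall>g h. continuous_on X g \<longrightarrow> continuous_on X h \<longrightarrow>
        \<tau> (\<lambda>x. g x + h x) = \<tau> g + \<tau> h) \<and>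
     (\<forall>c g. continuous_on X g \<longrightarrow> \<tau> (\<lambda>x. c * g x) = c * \<tau> g) \<and>
     (\<forall>g. continuous_on X g \<longrightarrow> (\<forall>x\<in>X. Im (g x) = 0 \<and> 0 \<le> Re (g x)) \<longrightarrow>
        Im (\<tau> g) = 0 \<and> 0 \<le> Re (\<tau> g)) \<and>
     \<tau> (\<lambda>x. 1) = 1 \<and>
     (\<forall>g h. continuous_on X g \<longrightarrow> continuous_on X h \<longrightarrow>
        \<tau> (\<lambda>x. g x * h x) = \<tau> (\<lambda>x. h x * g x))"

end

theory Submission
  imports Defs
begin

text \<open>Take the shifts \<open>f\<^sub>i = f + i\<eta>\<close>, \<open>i = 1, \<dots>, n\<close>, with \<open>1/n < \<epsilon>\<close> and \<open>n\<eta> < \<epsilon>\<close>.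
  Any two of them differ by at least \<open>\<eta>\<close> at every point, so for \<open>\<delta> = \<eta>/4\<close> at most one
  \<open>f\<^sub>i(x)\<close> lies in \<open>[-\<delta>, \<delta>]\<close>. Hence \<open>\<Sum>\<^sub>i \<chi>\<^sub>\<delta>(f\<^sub>i) \<le> 1\<close> pointwise, and positivity and
  unitality of a tracial state give \<open>\<tau>(\<Sum>\<^sub>i \<chi>\<^sub>\<delta>(f\<^sub>i)) \<le> 1\<close>.\<close>

lemma chi_eq_clamp: "\<delta> > 0 \<Longrightarrow> chi \<delta> t = max 0 (min 1 (2 * (\<delta> - \<bar>t\<bar>) / \<delta>))"
  unfolding chi_def by (auto simp: field_simps)

lemma continuous_on_chi: "\<delta> > 0 \<Longrightarrow> continuous_on S (chi \<delta>)"
  by (simp add: chi_eq_clamp continuous_intros)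

lemma chi_nonneg: "\<delta> > 0 \<Longrightarrow> 0 \<le> chi \<delta> t"
  by (simp add: chi_eq_clamp)

lemma chi_le_1: "\<delta> > 0 \<Longrightarrow> chi \<delta> t \<le> 1"
  by (simp add: chi_eq_clamp)

lemma chi_eq_0: "\<bar>t\<bar> > \<delta> \<Longrightarrow> chi \<delta> t = 0"
  by (simp add: chi_def)

lemma sup_norm_const_le: "sup_norm X (\<lambda>x. c) \<le> norm c"
  by (simp add: sup_norm_def)

lemma tracial_state_add:
  "tracial_state X \<tau> \<Longrightarrow> continuous_on X g \<Longrightarrow> continuous_on X h \<Longrightarrow>
     \<tau> (\<lambda>x. g x + h x) = \<tau> g + \<tau> h"
  unfolding tracial_state_def by blast

lemma tracial_state_zero: "tracial_state X \<tau> \<Longrightarrow> \<tau> (\<lambda>x. 0) = 0"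
  using tracial_state_add[of X \<tau> "\<lambda>x. 0" "\<lambda>x. 0"] by simp

lemma tracial_state_one: "tracial_state X \<tau> \<Longrightarrow> \<tau> (\<lambda>x. 1) = 1"
  unfolding tracial_state_def by blast

lemma tracial_state_nonneg:
  "tracial_state X \<tau> \<Longrightarrow> continuous_on X g \<Longrightarrow> (\<And>x. x \<in> X \<Longrightarrow> 0 \<le> g x) \<Longrightarrow>
     Im (\<tau> (\<lambda>x. complex_of_real (g x))) = 0 \<and> 0 \<le> Re (\<tau> (\<lambda>x. complex_of_real (g x)))"
  unfolding tracial_state_def by (simp add: continuous_intros)

lemma tracial_state_sum:
  assumes "tracial_state X \<tau>" "finite I" "\<And>i. i \<in> I \<Longrightarrow> continuous_on X (g i)"
  shows "\<tau> (\<lambda>x. \<Sum>i\<in>I. g i x) = (\<Sum>i\<in>I. \<tau> (g i))"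
  using assms(2,3)
proof (induction I rule: finite_induct)
  case empty
  show ?case using tracial_state_zero[OF assms(1)] by simp
next
  case (insert a I)
  have "\<tau> (\<lambda>x. g a x + (\<Sum>i\<in>I. g i x)) = \<tau> (g a) + \<tau> (\<lambda>x. \<Sum>i\<in>I. g i x)"
    using insert.prems by (intro tracial_state_add[OF assms(1)] continuous_intros) auto
  with insert show ?case by simp
qed

lemma tracial_state_unit_interval:
  assumes \<tau>: "tracial_state X \<tau>" and g: "continuous_on X g"
    and bounds: "\<And>x. x \<in> X \<Longrightarrow> 0 \<le> g x \<and> g x \<le> 1"
  shows "Im (\<tau> (\<lambda>x. complex_of_real (g x))) = 0 \<and> Re (\<tau> (\<lambda>x. complex_of_real (g x))) \<le> 1"
proof -
  let ?g = "\<lambda>x. complex_of_real (g x)" and ?h = "\<lambda>x. complex_of_real (1 - g x)"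
  have "\<tau> ?h + \<tau> ?g = \<tau> (\<lambda>x. 1)"
    using tracial_state_add[OF \<tau>, of ?h ?g] g by (simp add: continuous_intros)
  then have "\<tau> ?g = 1 - \<tau> ?h"
    using tracial_state_one[OF \<tau>] by (simp add: algebra_simps)
  moreover have "Im (\<tau> ?h) = 0 \<and> 0 \<le> Re (\<tau> ?h)"
    using bounds by (intro tracial_state_nonneg[OF \<tau>] continuous_intros g) simp
  ultimately show ?thesis by simp
qed

lemma tracial_state_sum_chi:
  assumes \<tau>: "tracial_state X \<tau>" and "\<delta> > 0" "finite I"
    and cont: "\<And>i. i \<in> I \<Longrightarrow> continuous_on X (F i)"
    and le_1: "\<And>x. x \<in> X \<Longrightarrow> (\<Sum>i\<in>I. chi \<delta> (F i x)) \<le> 1"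
  shows "Im (\<Sum>i\<in>I. \<tau> (\<lambda>x. complex_of_real (chi \<delta> (F i x)))) = 0 \<and>
         Re (\<Sum>i\<in>I. \<tau> (\<lambda>x. complex_of_real (chi \<delta> (F i x)))) \<le> 1"
proof -
  have cont_chi: "continuous_on X (\<lambda>x. chi \<delta> (F i x))" if "i \<in> I" for i
    using continuous_on_compose2[OF continuous_on_chi[OF \<open>\<delta> > 0\<close>] cont[OF that]] by blast
  have "(\<Sum>i\<in>I. \<tau> (\<lambda>x. complex_of_real (chi \<delta> (F i x))))
        = \<tau> (\<lambda>x. complex_of_real (\<Sum>i\<in>I. chi \<delta> (F i x)))"
    using tracial_state_sum[OF \<tau> \<open>finite I\<close>] cont_chi by (simp add: continuous_intros)
  moreover have "Im (\<tau> (\<lambda>x. complex_of_real (\<Sum>i\<in>I. chi \<delta> (F i x)))) = 0 \<and>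
                 Re (\<tau> (\<lambda>x. complex_of_real (\<Sum>i\<in>I. chi \<delta> (F i x)))) \<le> 1"
    using cont_chi le_1 chi_nonneg[OF \<open>\<delta> > 0\<close>]
    by (intro tracial_state_unit_interval[OF \<tau>] continuous_on_sum) (auto intro: sum_nonneg)
  ultimately show ?thesis by simp
qed

lemma shift_near_zero_unique:
  fixes t \<eta> \<delta> :: real
  assumes "\<bar>t + real i * \<eta>\<bar> \<le> \<delta>" "\<bar>t + real j * \<eta>\<bar> \<le> \<delta>" "2 * \<delta> < \<eta>"
  shows "i = j"
proof (rule ccontr)
  assume "i \<noteq> j"
  then have "1 \<le> \<bar>real i - real j\<bar>" by linarith
  moreover have "\<eta> > 0" using assms by linarith
  ultimately have "\<eta> \<le> \<bar>real i - real j\<bar> * \<eta>" using mult_right_mono[of 1 _ \<eta>] by simp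
  also have "\<dots> = \<bar>(t + real i * \<eta>) - (t + real j * \<eta>)\<bar>"
    using \<open>\<eta> > 0\<close> by (simp add: abs_mult left_diff_distrib[symmetric])
  also have "\<dots> \<le> 2 * \<delta>" using assms(1,2) by linarith
  finally show False using assms(3) by linarith
qed

lemma card_shift_near_zero_le_1:
  fixes t \<eta> \<delta> :: real
  assumes "finite I" "2 * \<delta> < \<eta>"
  shows "card {i\<in>I. \<bar>t + real i * \<eta>\<bar> \<le> \<delta>} \<le> 1"
  unfolding One_nat_def using assms
  by (subst card_le_Suc0_iff_eq) (auto intro: shift_near_zero_unique[OF _ _ assms(2)])

lemma sum_chi_shift_le_1:
  fixes t \<eta> \<delta> :: real
  assumes "finite I" "\<delta> > 0" "2 * \<delta> < \<eta>"
  shows "(\<Sum>i\<in>I. chi \<delta> (t + real i * \<eta>)) \<le> 1"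
proof -
  let ?J = "{i\<in>I. \<bar>t + real i * \<eta>\<bar> \<le> \<delta>}"
  have "(\<Sum>i\<in>I. chi \<delta> (t + real i * \<eta>)) = (\<Sum>i\<in>?J. chi \<delta> (t + real i * \<eta>))"
    using \<open>finite I\<close> by (intro sum.mono_neutral_right) (auto intro: chi_eq_0)
  also have "\<dots> \<le> real (card ?J) * 1"
    by (rule sum_bounded_above) (simp add: chi_le_1[OF \<open>\<delta> > 0\<close>])
  also have "\<dots> \<le> 1"
    using card_shift_near_zero_le_1[OF assms(1,3)] by simp
  finally show ?thesis .
qed

theorem corollary3p8:
  fixes X :: "'a::metric_space set" and f :: "'a \<Rightarrow> real" and \<epsilon> :: real
  assumes "compact X" and "continuous_on X f" and "\<epsilon> > 0"
  shows "\<exists>(n::nat) (\<delta>::real) (F :: nat \<Rightarrow> 'a \<Rightarrow> real).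
           n > 0 \<and> \<delta> > 0 \<and>
           (\<forall>i\<in>{1..n}. continuous_on X (F i) \<and> sup_norm X (\<lambda>x. f x - F i x) < \<epsilon>) \<and>
           (\<forall>x\<in>X. real (card {i\<in>{1..n}. \<bar>F i x\<bar> < \<delta>}) / real n < \<epsilon>) \<and>
           (\<forall>\<tau>. tracial_state X \<tau> \<longrightarrow>
              (let s = (\<Sum>i=1..n. \<tau> (\<lambda>x. complex_of_real (chi \<delta> (F i x)))) / of_nat n
               in Im s = 0 \<and> Re s < \<epsilon>))"
proof -
  obtain n :: nat where "n > 0" and n: "1 / real n < \<epsilon>"
    using ex_inverse_of_nat_less[OF \<open>\<epsilon> > 0\<close>] by (auto simp: inverse_eq_divide)
  define \<eta> where "\<eta> = \<epsilon> / (real n + 1)"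
  define \<delta> where "\<delta> = \<eta> / 4"
  define F where "F i x = f x + real i * \<eta>" for i x
  have "\<eta> > 0" "real n * \<eta> < \<epsilon>"
    using \<open>\<epsilon> > 0\<close> by (simp_all add: \<eta>_def field_simps)
  then have "\<delta> > 0" "2 * \<delta> < \<eta>"
    by (simp_all add: \<delta>_def)
  have avg: "a / real n < \<epsilon>" if "a \<le> 1" for a
    using divide_right_mono[OF that, of "real n"] n by simp
  have cont: "continuous_on X (F i)" for i
    unfolding F_def by (intro continuous_intros assms(2))
  have "sup_norm X (\<lambda>x. f x - F i x) < \<epsilon>" if "i \<le> n" for i
  proof -
    have "sup_norm X (\<lambda>x. f x - F i x) \<le> real i * \<eta>"
      using sup_norm_const_le[of X "- real i * \<eta>"] \<open>\<eta> > 0\<close> by (simp add: F_def abs_mult)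
    also have "\<dots> \<le> real n * \<eta>"
      using that \<open>\<eta> > 0\<close> by simp
    finally show ?thesis using \<open>real n * \<eta> < \<epsilon>\<close> by linarith
  qed
  moreover have "real (card {i\<in>{1..n}. \<bar>F i x\<bar> < \<delta>}) / real n < \<epsilon>" for x
  proof (rule avg)
    have "card {i\<in>{1..n}. \<bar>F i x\<bar> < \<delta>} \<le> card {i\<in>{1..n}. \<bar>f x + real i * \<eta>\<bar> \<le> \<delta>}"
      by (intro card_mono) (auto simp: F_def)
    also have "\<dots> \<le> 1"
      by (rule card_shift_near_zero_le_1[OF finite_atLeastAtMost \<open>2 * \<delta> < \<eta>\<close>])
    finally show "real (card {i\<in>{1..n}. \<bar>F i x\<bar> < \<delta>}) \<le> 1" by simp
  qed
  moreover have "let s = (\<Sum>i=1..n. \<tau> (\<lambda>x. complex_of_real (chi \<delta> (F i x)))) / of_nat n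
                 in Im s = 0 \<and> Re s < \<epsilon>" if \<tau>: "tracial_state X \<tau>" for \<tau>
  proof -
    have "(\<Sum>i\<in>{1..n}. chi \<delta> (F i x)) \<le> 1" for x
      unfolding F_def by (rule sum_chi_shift_le_1[OF finite_atLeastAtMost \<open>\<delta> > 0\<close> \<open>2 * \<delta> < \<eta>\<close>])
    then have "Im (\<Sum>i\<in>{1..n}. \<tau> (\<lambda>x. complex_of_real (chi \<delta> (F i x)))) = 0 \<and>
               Re (\<Sum>i\<in>{1..n}. \<tau> (\<lambda>x. complex_of_real (chi \<delta> (F i x)))) \<le> 1"
      by (intro tracial_state_sum_chi[OF \<tau> \<open>\<delta> > 0\<close> finite_atLeastAtMost cont])
    then show ?thesis
      using avg by (simp add: Let_def Re_divide_of_nat Im_divide_of_nat)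
  qed
  ultimately show ?thesis
    using \<open>n > 0\<close> \<open>\<delta> > 0\<close> cont by (intro exI[of _ n] exI[of _ \<delta>] exI[of _ F]) simp
qed

end
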